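(* Let $D\ge 3$ and let $G$ be an $n$-vertex graph satisfying properties (C1) and (C3). Let $H=\mathrm{Co}_2(G)$. Then: (i) if $v\in V(H)$, then $\deg_H(v)\ge \deg_G(v)-2$; (ii) if $v\in V(H)\cap S_G(D)$, then $\deg_H(v)\ge\deg_G(v)-1$; (iii) if $\deg_G(v)\ge 3$, then $v\in V(H)$.
   Context: $S_G(D)$ is the set of vertices of $G$ of degree at most $D$. $\mathrm{Co}_2(G)$ is the unique maximal subgraph of $G$ with minimum degree at least $2$. Property (C1): for every set $R\subseteq V(G)$ with $|R|\le 100$ such that $G[R]$ is connected, $|R\cap S_G(D)|\le 2$. Property (C3): $G$ has no connected component with $k$ vertices for any $k\in[3,n/2]$. *)

theory Defs
  imports Main
begin

definition simple_graph :: "'a set \<Rightarrow> ('a \<Rightarrow> 'a \<Rightarrow> bool) \<Rightarrow> bool" where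
  "simple_graph V E \<longleftrightarrow> finite V \<and> (\<forall>u v. E u v \<longrightarrow> E v u)
     \<and> (\<forall>v. \<not> E v v) \<and> (\<forall>u v. E u v \<longrightarrow> u \<in> V \<and> v \<in> V)"

definition deg :: "('a \<Rightarrow> 'a \<Rightarrow> bool) \<Rightarrow> 'a set \<Rightarrow> 'a \<Rightarrow> nat" where
  "deg E A v = card {u \<in> A. E v u}"

definition low_deg :: "'a set \<Rightarrow> ('a \<Rightarrow> 'a \<Rightarrow> bool) \<Rightarrow> nat \<Rightarrow> 'a set" where
  "low_deg V E D = {v \<in> V. deg E V v \<le> D}"

definition connected_set :: "('a \<Rightarrow> 'a \<Rightarrow> bool) \<Rightarrow> 'a set \<Rightarrow> bool" where
  "connected_set E R \<longleftrightarrow>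
     (\<forall>x\<in>R. \<forall>y\<in>R. (x, y) \<in> {(a, b). a \<in> R \<and> b \<in> R \<and> E a b}\<^sup>*)"

definition component :: "'a set \<Rightarrow> ('a \<Rightarrow> 'a \<Rightarrow> bool) \<Rightarrow> 'a set \<Rightarrow> bool" where
  "component V E C \<longleftrightarrow> C \<noteq> {} \<and> C \<subseteq> V \<and> connected_set E C
     \<and> (\<forall>u\<in>C. \<forall>w. E u w \<longrightarrow> w \<in> C)"

text \<open>Vertex set of Co_2(G), the unique maximal subgraph of minimum degree
at least 2: the union of all vertex sets W inducing min degree \<ge> 2
(Co_2(G) is the subgraph induced on this set).\<close>
definition core2 :: "'a set \<Rightarrow> ('a \<Rightarrow> 'a \<Rightarrow> bool) \<Rightarrow> 'a set" where
  "core2 V E = \<Union>{W. W \<subseteq> V \<and> (\<forall>v\<in>W. deg E W v \<ge> 2)}"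

definition prop_C1 :: "'a set \<Rightarrow> ('a \<Rightarrow> 'a \<Rightarrow> bool) \<Rightarrow> nat \<Rightarrow> bool" where
  "prop_C1 V E D \<longleftrightarrow> (\<forall>R. R \<subseteq> V \<and> card R \<le> 100 \<and> connected_set E R
      \<longrightarrow> card (R \<inter> low_deg V E D) \<le> 2)"

definition prop_C3 :: "'a set \<Rightarrow> ('a \<Rightarrow> 'a \<Rightarrow> bool) \<Rightarrow> bool" where
  "prop_C3 V E \<longleftrightarrow> (\<forall>C. component V E C \<longrightarrow>
      \<not> (3 \<le> card C \<and> 2 * card C \<le> card V))"

end

theory Submission
  imports Defs
begin

text \<open>Any vertex v has at most two neighbours in S_G(D), counting v itself if it lies in
S_G(D): otherwise v together with three such vertices spans a connected star violating (C1).
Now let Y be the set of vertices outside the 2-core of degree at least 3. If Y were nonempty,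
the maximality of the core would yield some y \<in> Y with at most one neighbour in core \<union> Y;
its remaining neighbours have degree at most 2, hence lie in S_G(D), so y has degree at most
3 and at most 2 if y \<in> S_G(D), contradicting D \<ge> 3. Hence every vertex outside the core
has degree at most 2, and the degree bounds on core vertices follow in the same way.\<close>

lemma connected_set_insert_neighbours:
  assumes sym: "\<forall>u v. E u v \<longrightarrow> E v u" and L: "\<forall>u\<in>L. E v u"
  shows "connected_set E (insert v L)"
  unfolding connected_set_def
proof (intro ballI)
  fix x z assume x: "x \<in> insert v L" and z: "z \<in> insert v L"
  let ?r = "{(a, b). a \<in> insert v L \<and> b \<in> insert v L \<and> E a b}"
  have "(x, v) \<in> ?r\<^sup>*" using x L sym by (cases "x = v") auto
  also have "(v, z) \<in> ?r\<^sup>*" using z L by (cases "z = v") auto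
  finally show "(x, z) \<in> ?r\<^sup>*" .
qed

lemma deg_mono:
  assumes "finite B" "A \<subseteq> B" shows "deg E A v \<le> deg E B v"
  unfolding deg_def using assms by (intro card_mono) auto

lemma deg_le_deg_plus_deg_Diff:
  assumes "finite V" "A \<subseteq> V" shows "deg E V v \<le> deg E A v + deg E (V - A) v"
proof -
  have "deg E V v \<le> card ({u \<in> A. E v u} \<union> {u \<in> V - A. E v u})"
    unfolding deg_def using assms by (intro card_mono) (auto intro: finite_subset)
  also have "\<dots> \<le> deg E A v + deg E (V - A) v"
    unfolding deg_def by (rule card_Un_le)
  finally show ?thesis .
qed

lemma deg_within_low_deg_le:
  assumes G: "simple_graph V E" and C1: "prop_C1 V E D"
    and v: "v \<in> V" and M: "M \<subseteq> low_deg V E D"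
  shows "deg E M v \<le> 2" and "v \<in> low_deg V E D \<Longrightarrow> deg E M v \<le> 1"
proof -
  have fin: "finite V" and sym: "\<forall>u v. E u v \<longrightarrow> E v u" and irr: "\<not> E v v"
    using G unfolding simple_graph_def by auto
  have low_V: "low_deg V E D \<subseteq> V" unfolding low_deg_def by auto
  let ?N = "{u \<in> M. E v u}"
  let ?S = "insert v ?N \<inter> low_deg V E D"
  have "?N \<subseteq> V" using M low_V by auto
  then have fin_N: "finite ?N" using fin by (rule finite_subset)
  have card_S: "card ?S \<le> 2"
  proof (rule ccontr)
    assume "\<not> card ?S \<le> 2"
    then have "3 \<le> card ?S" by simp
    then obtain T where T: "T \<subseteq> ?S" "card T = 3"
      by (meson obtain_subset_with_card_n)
    have fin_T: "finite T" using T(2) by (intro card_ge_0_finite) simp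
    let ?R = "insert v T"
    have "?R \<subseteq> V" using v T(1) low_V by auto
    moreover have "card ?R \<le> 100" using fin_T T(2) by (simp add: card_insert_if)
    moreover have "connected_set E (insert v (T - {v}))"
      using sym T(1) by (intro connected_set_insert_neighbours) auto
    ultimately have "card (?R \<inter> low_deg V E D) \<le> 2"
      using C1 unfolding prop_C1_def by simp
    moreover have "card T \<le> card (?R \<inter> low_deg V E D)"
      using T(1) fin_T by (intro card_mono) auto
    ultimately show False using T(2) by simp
  qed
  have fin_S: "finite ?S" using fin_N by simp
  have "?N \<subseteq> ?S" using M by auto
  then show "deg E M v \<le> 2" unfolding deg_def
    by (rule le_trans[OF card_mono[OF fin_S] card_S])
  assume "v \<in> low_deg V E D"
  then have "insert v ?N \<subseteq> ?S" using M by auto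
  then have "card (insert v ?N) \<le> 2" by (rule le_trans[OF card_mono[OF fin_S] card_S])
  then show "deg E M v \<le> 1" unfolding deg_def using fin_N irr by simp
qed

lemma core2_subset: "core2 V E \<subseteq> V"
  unfolding core2_def by auto

lemma subset_core2:
  assumes "W \<subseteq> V" "\<forall>v\<in>W. deg E W v \<ge> 2" shows "W \<subseteq> core2 V E"
  using assms unfolding core2_def by blast

lemma deg_core2_ge_2:
  assumes fin: "finite V" and v: "v \<in> core2 V E" shows "deg E (core2 V E) v \<ge> 2"
proof -
  obtain W where W: "W \<subseteq> V" "\<forall>v\<in>W. deg E W v \<ge> 2" "v \<in> W"
    using v unfolding core2_def by auto
  have "W \<subseteq> core2 V E" using W(1,2) by (rule subset_core2)
  then have "deg E W v \<le> deg E (core2 V E) v"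
    by (rule deg_mono[OF finite_subset[OF core2_subset fin]])
  then show ?thesis using W(2,3) by fastforce
qed

lemma ex_deg_le_1_outside_core2:
  assumes fin: "finite V" and Y: "Y \<subseteq> V - core2 V E" "Y \<noteq> {}"
  shows "\<exists>y\<in>Y. deg E (core2 V E \<union> Y) y \<le> 1"
proof (rule ccontr)
  let ?K = "core2 V E"
  assume "\<not> ?thesis"
  then have Y_deg: "\<forall>y\<in>Y. deg E (?K \<union> Y) y \<ge> 2" by auto
  have K_Y_V: "?K \<union> Y \<subseteq> V" using Y(1) core2_subset[of V E] by blast
  have "deg E (?K \<union> Y) v \<ge> 2" if "v \<in> ?K" for v
    using deg_core2_ge_2[OF fin that] deg_mono[OF finite_subset[OF K_Y_V fin], of ?K E v]
    by simp
  with Y_deg have "?K \<union> Y \<subseteq> ?K" using K_Y_V by (intro subset_core2) auto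
  then show False using Y by auto
qed

lemma deg_outside_core2_le_2:
  assumes G: "simple_graph V E" and D: "D \<ge> 3" and C1: "prop_C1 V E D"
    and x: "x \<in> V - core2 V E"
  shows "deg E V x \<le> 2"
proof (rule ccontr)
  let ?K = "core2 V E"
  let ?Y = "{y \<in> V - ?K. deg E V y > 2}"
  have fin: "finite V" using G unfolding simple_graph_def by simp
  assume "\<not> deg E V x \<le> 2"
  then have "?Y \<noteq> {}" using x by auto
  moreover have "?Y \<subseteq> V - ?K" by blast
  ultimately obtain y where y: "y \<in> ?Y" "deg E (?K \<union> ?Y) y \<le> 1"
    using ex_deg_le_1_outside_core2[OF fin] by blast
  have "V - (?K \<union> ?Y) \<subseteq> low_deg V E D" using D unfolding low_deg_def by auto
  then have "deg E (V - (?K \<union> ?Y)) y \<le> 2"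
    and "y \<in> low_deg V E D \<Longrightarrow> deg E (V - (?K \<union> ?Y)) y \<le> 1"
    using deg_within_low_deg_le[OF G C1] y(1) by auto
  moreover have "deg E V y \<le> deg E (?K \<union> ?Y) y + deg E (V - (?K \<union> ?Y)) y"
    using core2_subset[of V E] by (intro deg_le_deg_plus_deg_Diff[OF fin]) auto
  moreover have "y \<notin> low_deg V E D \<Longrightarrow> deg E V y > D" using y(1) unfolding low_deg_def by auto
  ultimately show False using y D by fastforce
qed

theorem lemma5p1:
  fixes V :: "'a set" and E :: "'a \<Rightarrow> 'a \<Rightarrow> bool" and D :: nat
  assumes "simple_graph V E" and "D \<ge> 3"
    and "prop_C1 V E D" and "prop_C3 V E"
  shows "(\<forall>v \<in> core2 V E. deg E (core2 V E) v + 2 \<ge> deg E V v)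
       \<and> (\<forall>v \<in> core2 V E \<inter> low_deg V E D. deg E (core2 V E) v + 1 \<ge> deg E V v)
       \<and> (\<forall>v \<in> V. deg E V v \<ge> 3 \<longrightarrow> v \<in> core2 V E)"
proof -
  let ?K = "core2 V E"
  have fin: "finite V" using assms(1) unfolding simple_graph_def by simp
  have outside_low: "V - ?K \<subseteq> low_deg V E D"
    using deg_outside_core2_le_2[OF assms(1-3)] assms(2) unfolding low_deg_def by fastforce
  have split: "deg E V v \<le> deg E ?K v + deg E (V - ?K) v" for v
    by (rule deg_le_deg_plus_deg_Diff[OF fin core2_subset])
  have outside_le_2: "deg E (V - ?K) v \<le> 2" if "v \<in> V" for v
    by (rule deg_within_low_deg_le(1)[OF assms(1,3) that outside_low])
  have outside_le_1: "deg E (V - ?K) v \<le> 1" if "v \<in> low_deg V E D" for v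
    using that deg_within_low_deg_le(2)[OF assms(1,3) _ outside_low] unfolding low_deg_def by blast
  show ?thesis
  proof (intro conjI ballI impI)
    fix v assume "v \<in> ?K"
    then show "deg E V v \<le> deg E ?K v + 2"
      using split[of v] outside_le_2[of v] core2_subset[of V E] by fastforce
  next
    fix v assume "v \<in> ?K \<inter> low_deg V E D"
    then show "deg E V v \<le> deg E ?K v + 1" using split[of v] outside_le_1[of v] by fastforce
  next
    fix v assume "v \<in> V" "3 \<le> deg E V v"
    then show "v \<in> ?K" using deg_outside_core2_le_2[OF assms(1-3)] by fastforce
  qed
qed

end
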